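(* Let $\mathsf{A}=\{A_1,\ldots,A_\ell\}$ be a finite set of $d \times d$ matrices over $\mathbb{C}$, and let $\mathsf{R} \subseteq \mathsf{A}$ be the set of all elements of $\mathsf{A}$ which have rank greater than or equal to two. Suppose that either $\mathsf{R}$ is empty or $\varrho(\mathsf{R})<\varrho(\mathsf{A})$. Then there exist an integer $n \geq 1$ and indices $i_1,\ldots,i_n \in \{1,\ldots,\ell\}$ such that each element of $\mathsf{A}$ of rank exactly one appears at most once in the sequence $A_{i_1},\ldots,A_{i_n}$, and \[\varrho(\mathsf{A})=\rho(A_{i_1}\cdots A_{i_n})^{1/n}.\]
   Context: For a square matrix $A$, $\rho(A)$ denotes its ordinary spectral radius. For a nonempty bounded set $\mathsf{A}$ of $d\times d$ complex matrices, the joint spectral radius is \[\varrho(\mathsf{A})=\lim_{n \to \infty} \sup\left\{\left\|A_{i_n} \cdots A_{i_1}\right\|^{1/n} \colon A_{i_j} \in \mathsf{A}\right\},\] where $\|\cdot\|$ is any matrix norm (the limit exists and is independent of the norm). *)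

theory Defs
  imports Complex_Main "Jordan_Normal_Form.Spectral_Radius" "Jordan_Normal_Form.DL_Rank"
begin

text \<open>Frobenius norm of a complex matrix (any matrix norm gives the same JSR).\<close>
definition mat_fnorm :: "complex mat \<Rightarrow> real" where
  "mat_fnorm A = sqrt (\<Sum>i<dim_row A. \<Sum>j<dim_col A. (cmod (A $$ (i,j)))\<^sup>2)"

definition mat_list_prod :: "nat \<Rightarrow> complex mat list \<Rightarrow> complex mat" where
  "mat_list_prod d ws = foldr (\<lambda>B P. B * P) ws (1\<^sub>m d)"

definition jsr :: "nat \<Rightarrow> complex mat set \<Rightarrow> real" where
  "jsr d S = lim (\<lambda>n. (SUP ws \<in> {ws. length ws = n \<and> set ws \<subseteq> S}.
                          mat_fnorm (mat_list_prod d ws) powr (1 / real n)))"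

definition mat_rank :: "nat \<Rightarrow> complex mat \<Rightarrow> nat" where
  "mat_rank d M = vec_space.rank d M"

end

theory Submission
  imports Defs
begin

text \<open>Suppose no product in which each rank-one matrix occurs at most once attains the joint
  spectral radius \<open>s\<close>. Factor each matrix of rank at most one as \<open>x y\<^sup>T\<close> and cut a word over
  \<open>A\<close> at these factors: it becomes a word over the set \<open>R\<close> of matrices of rank at least two,
  followed by blocks \<open>x y\<^sup>T W\<close> with \<open>W\<close> a word over \<open>R\<close>. The product of consecutive blocks is an
  outer product times the scalars \<open>y\<^sup>T W x'\<close> linking them, and the weight of a cyclic sequence
  of blocks is an eigenvalue of its product. A cycle using each rank-one matrix at most once
  flattens to an admissible word, so such cycles grow at a rate strictly below \<open>s\<close> (long ones
  because \<open>\<rho>(R) < s\<close>, short ones because there are finitely many). Every path of blocks is a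
  short path with such cycles cut out of it, so all products of length \<open>n\<close> over \<open>A\<close> are
  \<open>O(t\<^sup>n)\<close> for some \<open>t < s\<close>, contradicting the definition of \<open>s\<close>.\<close>

section \<open>Entrywise norms\<close>

definition norm1 :: "complex mat \<Rightarrow> real" where
  "norm1 M = (\<Sum>i<dim_row M. \<Sum>j<dim_col M. cmod (M $$ (i,j)))"

definition vnorm1 :: "nat \<Rightarrow> (nat \<Rightarrow> complex) \<Rightarrow> real" where
  "vnorm1 d x = (\<Sum>i<d. cmod (x i))"

lemma norm1_nonneg: "0 \<le> norm1 M"
  unfolding norm1_def by (intro sum_nonneg) auto

lemma vnorm1_nonneg: "0 \<le> vnorm1 d x"
  unfolding vnorm1_def by (intro sum_nonneg) auto

lemma vnorm1_ge: "j < d \<Longrightarrow> cmod (x j) \<le> vnorm1 d x"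
  unfolding vnorm1_def by (rule member_le_sum) auto

lemma row_norm1_le: "i < dim_row M \<Longrightarrow> (\<Sum>j<dim_col M. cmod (M $$ (i,j))) \<le> norm1 M"
  unfolding norm1_def
  by (rule member_le_sum[where f = "\<lambda>i. \<Sum>j<dim_col M. cmod (M $$ (i,j))"]) (auto intro: sum_nonneg)

lemma entry_norm1_le:
  assumes "i < dim_row M" "j < dim_col M"
  shows "cmod (M $$ (i,j)) \<le> norm1 M"
proof -
  have "cmod (M $$ (i,j)) \<le> (\<Sum>j<dim_col M. cmod (M $$ (i,j)))"
    using assms by (intro member_le_sum) auto
  also have "\<dots> \<le> norm1 M" by (rule row_norm1_le[OF assms(1)])
  finally show ?thesis .
qed

lemma norm1_mult_le:
  assumes A: "A \<in> carrier_mat d d" and B: "B \<in> carrier_mat d d"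
  shows "norm1 (A * B) \<le> norm1 A * norm1 B"
proof -
  have "norm1 (A * B) = (\<Sum>i<d. \<Sum>j<d. cmod (\<Sum>l<d. A $$ (i,l) * B $$ (l,j)))"
    unfolding norm1_def using A B
    by (intro sum.cong refl) (auto simp: scalar_prod_def row_def col_def lessThan_atLeast0)
  also have "\<dots> \<le> (\<Sum>i<d. \<Sum>j<d. \<Sum>l<d. cmod (A $$ (i,l)) * cmod (B $$ (l,j)))"
    by (intro sum_mono) (auto intro!: order.trans[OF norm_sum] simp: norm_mult)
  also have "\<dots> = (\<Sum>i<d. \<Sum>l<d. cmod (A $$ (i,l)) * (\<Sum>j<d. cmod (B $$ (l,j))))"
    by (rule sum.cong[OF refl]) (subst sum.swap, simp add: sum_distrib_left)
  also have "\<dots> \<le> (\<Sum>i<d. \<Sum>l<d. cmod (A $$ (i,l)) * norm1 B)"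
    using B row_norm1_le[of _ B] by (intro sum_mono mult_left_mono) auto
  also have "\<dots> = norm1 A * norm1 B"
    using A unfolding norm1_def by (simp add: sum_distrib_right)
  finally show ?thesis .
qed

lemma norm1_smult: "norm1 (c \<cdot>\<^sub>m M) = cmod c * norm1 M"
  unfolding norm1_def by (simp add: sum_distrib_left norm_mult)

lemma norm1_one_mat: "norm1 (1\<^sub>m d) = real d"
proof -
  have "norm1 (1\<^sub>m d) = (\<Sum>i<d. \<Sum>j<d. if j = i then 1 else 0)"
    unfolding norm1_def by (intro sum.cong refl) auto
  then show ?thesis by (simp add: sum.delta)
qed

lemma mat_fnorm_nonneg: "0 \<le> mat_fnorm M"
  unfolding mat_fnorm_def by (auto intro!: sum_nonneg)

lemma entry_mat_fnorm_le:
  assumes "i < dim_row M" "j < dim_col M"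
  shows "cmod (M $$ (i,j)) \<le> mat_fnorm M"
proof -
  let ?s = "\<lambda>i. \<Sum>j<dim_col M. (cmod (M $$ (i,j)))\<^sup>2"
  have "(cmod (M $$ (i,j)))\<^sup>2 \<le> ?s i"
    using assms by (intro member_le_sum) auto
  also have "\<dots> \<le> (\<Sum>i<dim_row M. ?s i)"
    using assms by (intro member_le_sum) (auto intro: sum_nonneg)
  finally show ?thesis unfolding mat_fnorm_def by (simp add: real_le_rsqrt)
qed

lemma norm1_le_mat_fnorm:
  assumes "M \<in> carrier_mat d d"
  shows "norm1 M \<le> real d * real d * mat_fnorm M"
proof -
  have dims: "dim_row M = d" "dim_col M = d" using assms by auto
  have "norm1 M \<le> (\<Sum>i<d. \<Sum>j<d. mat_fnorm M)"
    unfolding norm1_def dims by (intro sum_mono entry_mat_fnorm_le) (auto simp: dims)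
  then show ?thesis by simp
qed

lemma mat_fnorm_le_norm1: "mat_fnorm M \<le> norm1 M"
proof -
  let ?x = "\<lambda>i j. cmod (M $$ (i,j))"
  have "(\<Sum>i<dim_row M. \<Sum>j<dim_col M. (?x i j)\<^sup>2) \<le> (\<Sum>i<dim_row M. \<Sum>j<dim_col M. ?x i j * norm1 M)"
    unfolding power2_eq_square by (intro sum_mono mult_left_mono entry_norm1_le) auto
  also have "\<dots> = (norm1 M)\<^sup>2"
    unfolding norm1_def by (simp add: sum_distrib_right power2_eq_square)
  finally have "mat_fnorm M \<le> sqrt ((norm1 M)\<^sup>2)"
    unfolding mat_fnorm_def by (rule real_sqrt_le_mono)
  then show ?thesis using norm1_nonneg[of M] by simp
qed

lemma eigenvalue_norm_le_norm1:
  assumes A: "A \<in> carrier_mat d d" and v: "v \<in> carrier_vec d" "v \<noteq> 0\<^sub>v d"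
    and ev: "A *\<^sub>v v = c \<cdot>\<^sub>v v"
  shows "cmod c \<le> norm1 A"
proof -
  from v obtain i0 where i0: "i0 < d" "v $ i0 \<noteq> 0" by (auto simp: vec_eq_iff)
  obtain i where i: "i < d" and imax: "Max ((\<lambda>k. cmod (v $ k)) ` {..<d}) = cmod (v $ i)"
    using obtains_MAX[of "{..<d}"] i0 by blast
  have max: "cmod (v $ k) \<le> cmod (v $ i)" if "k < d" for k
    unfolding imax[symmetric] using that by (intro Max_ge) auto
  have pos: "0 < cmod (v $ i)" using max[OF i0(1)] i0(2) by auto
  have "cmod c * cmod (v $ i) = cmod ((A *\<^sub>v v) $ i)"
    using ev v i by (simp add: norm_mult)
  also have "\<dots> = cmod (\<Sum>k<d. A $$ (i,k) * v $ k)"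
    using A v i by (simp add: scalar_prod_def row_def lessThan_atLeast0)
  also have "\<dots> \<le> (\<Sum>k<d. cmod (A $$ (i,k))) * cmod (v $ i)"
    unfolding sum_distrib_right
    by (intro order.trans[OF norm_sum] sum_mono) (auto simp: norm_mult intro!: mult_left_mono max)
  also have "\<dots> \<le> norm1 A * cmod (v $ i)"
    using row_norm1_le[of i A] A i by (intro mult_right_mono) auto
  finally show ?thesis using pos by simp
qed

lemma mat_list_prod_Nil [simp]: "mat_list_prod d [] = 1\<^sub>m d"
  by (simp add: mat_list_prod_def)

lemma mat_list_prod_Cons [simp]: "mat_list_prod d (A # ws) = A * mat_list_prod d ws"
  by (simp add: mat_list_prod_def)

lemma mat_list_prod_carrier: "set ws \<subseteq> carrier_mat d d \<Longrightarrow> mat_list_prod d ws \<in> carrier_mat d d"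
  by (induction ws) auto

lemma mat_list_prod_append:
  "set xs \<subseteq> carrier_mat d d \<Longrightarrow> set ys \<subseteq> carrier_mat d d \<Longrightarrow>
   mat_list_prod d (xs @ ys) = mat_list_prod d xs * mat_list_prod d ys"
proof (induction xs)
  case Nil
  then show ?case using mat_list_prod_carrier[of ys d] by simp
next
  case (Cons A xs)
  then show ?case using mat_list_prod_carrier[of xs d] mat_list_prod_carrier[of ys d]
    by (simp add: assoc_mult_mat[of A d d _ d _ d])
qed

section \<open>Fekete's lemma for submultiplicative sequences\<close>

lemma submultiplicative_le_power:
  fixes b :: "nat \<Rightarrow> real"
  assumes sub: "\<And>m n. b (m + n) \<le> b m * b n" and bm: "0 \<le> b m"
  shows "b (Suc q * m + r) \<le> b m ^ Suc q * (if r = 0 then 1 else b r)"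
proof (induction q)
  case 0
  then show ?case using sub[of m r] by auto
next
  case (Suc q)
  have "b (Suc (Suc q) * m + r) \<le> b m * b (Suc q * m + r)"
    using sub[of m "Suc q * m + r"] by (simp add: algebra_simps)
  also have "\<dots> \<le> b m * (b m ^ Suc q * (if r = 0 then 1 else b r))"
    using Suc bm by (intro mult_left_mono) auto
  finally show ?case by (simp add: algebra_simps)
qed

lemma submultiplicative_le_root_power:
  fixes b :: "nat \<Rightarrow> real"
  assumes nn: "\<And>n. 0 \<le> b n" and sub: "\<And>m n. b (m + n) \<le> b m * b n"
    and m: "0 < m" and bm: "0 < b m"
  obtains K where "0 < K" "\<And>n. m \<le> n \<Longrightarrow> b n \<le> (b m powr (1 / real m)) ^ n * K"
proof -
  define \<beta> where "\<beta> = b m powr (1 / real m)"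
  have \<beta>: "0 < \<beta>" unfolding \<beta>_def using bm by simp
  have \<beta>m: "\<beta> ^ m = b m" unfolding \<beta>_def using bm m
    by (simp add: powr_realpow[symmetric] powr_powr)
  define h where "h r = (if r = 0 then 1 else b r)" for r
  define C where "C = (\<Sum>r<m. h r) + 1"
  have h_nonneg: "0 \<le> h r" for r unfolding h_def using nn by simp
  have hC: "h r \<le> C" if "r < m" for r
  proof -
    have "h r \<le> (\<Sum>r<m. h r)" using that h_nonneg by (intro member_le_sum) auto
    then show ?thesis unfolding C_def by simp
  qed
  have C: "0 < C" unfolding C_def using h_nonneg by (simp add: add_nonneg_pos sum_nonneg)
  define K where "K = max 1 (1 / \<beta>) ^ m * C"
  have K: "0 < K" unfolding K_def using C by simp
  have bound: "b n \<le> \<beta> ^ n * K" if n: "m \<le> n" for n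
  proof -
    define q where "q = n div m - 1"
    define r where "r = n mod m"
    have r: "r < m" unfolding r_def using m by simp
    have n_eq: "n = Suc q * m + r"
      using n m unfolding q_def r_def by (simp add: Suc_diff_le div_greater_zero_iff mult.commute)
    have pow: "b m ^ Suc q = \<beta> ^ n * (1 / \<beta>) ^ r"
    proof -
      have "\<beta> ^ r * (1 / \<beta>) ^ r = 1" using \<beta> by (simp add: power_mult_distrib[symmetric])
      then have "\<beta> ^ n * (1 / \<beta>) ^ r = \<beta> ^ (Suc q * m)"
        unfolding n_eq power_add by (simp only: mult.assoc mult_1_right)
      also have "\<dots> = b m ^ Suc q"
        unfolding \<beta>m[symmetric] power_mult[symmetric] by (metis mult.commute)
      finally show ?thesis by simp
    qed
    have "(1 / \<beta>) ^ r \<le> max 1 (1 / \<beta>) ^ r" using \<beta> by (intro power_mono) auto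
    also have "\<dots> \<le> max 1 (1 / \<beta>) ^ m" using r by (intro power_increasing) auto
    finally have rest: "(1 / \<beta>) ^ r \<le> max 1 (1 / \<beta>) ^ m" .
    have "b n \<le> b m ^ Suc q * h r"
      unfolding n_eq h_def using submultiplicative_le_power[OF sub] bm by simp
    also have "\<dots> \<le> b m ^ Suc q * C" using hC[OF r] bm by (intro mult_left_mono) auto
    also have "\<dots> = \<beta> ^ n * ((1 / \<beta>) ^ r * C)" unfolding pow by (simp only: mult.assoc)
    also have "\<dots> \<le> \<beta> ^ n * K"
      unfolding K_def using rest \<beta> C by (intro mult_left_mono mult_right_mono) auto
    finally show ?thesis .
  qed
  show ?thesis using that[OF K] bound unfolding \<beta>_def by blast
qed

lemma fekete_submultiplicative:
  fixes b :: "nat \<Rightarrow> real"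
  assumes nn: "\<And>n. 0 \<le> b n" and sub: "\<And>m n. b (m + n) \<le> b m * b n"
  shows "(\<lambda>n. b n powr (1 / real n)) \<longlonglongrightarrow> Inf ((\<lambda>n. b n powr (1 / real n)) ` {1..})"
proof -
  define g where "g n = b n powr (1 / real n)" for n
  define L where "L = Inf (g ` {1..})"
  have L_le: "L \<le> g n" if "1 \<le> n" for n
    unfolding L_def using that by (intro cInf_lower bdd_belowI[of _ 0]) (auto simp: g_def)
  have "g \<longlonglongrightarrow> L"
  proof (rule order_tendstoI)
    fix a assume "a < L"
    show "eventually (\<lambda>n. a < g n) sequentially"
      using eventually_ge_at_top[of 1] by eventually_elim (use L_le \<open>a < L\<close> in force)
  next
    fix a assume "L < a"
    then obtain m where m: "1 \<le> m" "g m < a"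
      unfolding L_def using cInf_lessD[of "g ` {1..}"] by auto
    show "eventually (\<lambda>n. g n < a) sequentially"
    proof (cases "b m = 0")
      case True
      have "b n = 0" if "m \<le> n" for n
        using sub[of m "n - m"] nn[of n] nn[of "n - m"] that True by simp
      then have "g n < a" if "m \<le> n" for n
        using that m by (auto simp: g_def)
      then show ?thesis by (rule eventually_sequentiallyI)
    next
      case False
      then have bm: "0 < b m" using nn[of m] by simp
      obtain K where K: "0 < K" "\<And>n. m \<le> n \<Longrightarrow> b n \<le> g m ^ n * K"
        using submultiplicative_le_root_power[OF nn sub _ bm] m(1) unfolding g_def by auto
      have gm: "0 < g m" using bm by (simp add: g_def)
      have g_le: "g n \<le> g m * K powr (1 / real n)" if n: "m \<le> n" for n
      proof -
        have "g n \<le> (g m ^ n * K) powr (1 / real n)"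
          using K(2)[OF n] nn unfolding g_def by (intro powr_mono2) auto
        also have "\<dots> = g m * K powr (1 / real n)"
          using gm K n m by (simp add: powr_mult powr_realpow[symmetric] powr_powr)
        finally show ?thesis .
      qed
      have "(\<lambda>n. g m * K powr (1 / real n)) \<longlonglongrightarrow> g m * K powr 0"
        using K by (intro tendsto_intros lim_1_over_n) auto
      then have "eventually (\<lambda>n. g m * K powr (1 / real n) < a) sequentially"
        using K m by (intro order_tendstoD) auto
      then show ?thesis using eventually_ge_at_top[of m]
        by eventually_elim (use g_le in force)
    qed
  qed
  then show ?thesis unfolding g_def L_def .
qed

section \<open>The joint spectral radius through the entrywise norm\<close>

definition words :: "'a set \<Rightarrow> nat \<Rightarrow> 'a list set" where
  "words S n = {ws. length ws = n \<and> set ws \<subseteq> S}"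

definition max_norm1 :: "nat \<Rightarrow> complex mat set \<Rightarrow> nat \<Rightarrow> real" where
  "max_norm1 d S n = Max ((\<lambda>ws. norm1 (mat_list_prod d ws)) ` words S n)"

definition jsr_norm1 :: "nat \<Rightarrow> complex mat set \<Rightarrow> real" where
  "jsr_norm1 d S = Inf ((\<lambda>n. max_norm1 d S n powr (1 / real n)) ` {1..})"

definition prod_norm1_bounded :: "nat \<Rightarrow> complex mat set \<Rightarrow> real \<Rightarrow> real \<Rightarrow> bool" where
  "prod_norm1_bounded d S C t \<longleftrightarrow>
     (\<forall>ws. set ws \<subseteq> S \<longrightarrow> norm1 (mat_list_prod d ws) \<le> C * t ^ length ws)"

lemma finite_words: "finite S \<Longrightarrow> finite (words S n)"
  unfolding words_def using finite_lists_length_eq[of S n] by (simp add: conj_commute)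

lemma words_nonempty: "S \<noteq> {} \<Longrightarrow> words S n \<noteq> {}"
  unfolding words_def
  by (auto intro!: exI[of _ "replicate n (SOME x. x \<in> S)"] some_in_eq[THEN iffD2])

lemma max_norm1_ge: "finite S \<Longrightarrow> ws \<in> words S n \<Longrightarrow> norm1 (mat_list_prod d ws) \<le> max_norm1 d S n"
  unfolding max_norm1_def by (intro Max_ge) (auto simp: finite_words)

lemma max_norm1_attained:
  assumes "finite S" "S \<noteq> {}"
  obtains ws where "ws \<in> words S n" "max_norm1 d S n = norm1 (mat_list_prod d ws)"
  using obtains_MAX[OF finite_words words_nonempty, OF assms] unfolding max_norm1_def by metis

lemma max_norm1_nonneg: "finite S \<Longrightarrow> S \<noteq> {} \<Longrightarrow> 0 \<le> max_norm1 d S n"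
  by (metis max_norm1_attained norm1_nonneg)

lemma max_norm1_add_le:
  assumes fin: "finite S" and ne: "S \<noteq> {}" and S: "S \<subseteq> carrier_mat d d"
  shows "max_norm1 d S (m + n) \<le> max_norm1 d S m * max_norm1 d S n"
proof -
  obtain ws where ws: "ws \<in> words S (m + n)" "max_norm1 d S (m + n) = norm1 (mat_list_prod d ws)"
    using max_norm1_attained[OF fin ne] .
  have w1: "take m ws \<in> words S m" and w2: "drop m ws \<in> words S n"
    using ws(1) unfolding words_def by (auto dest: in_set_takeD in_set_dropD)
  have c1: "set (take m ws) \<subseteq> carrier_mat d d" and c2: "set (drop m ws) \<subseteq> carrier_mat d d"
    using w1 w2 S unfolding words_def by auto
  have "max_norm1 d S (m + n) \<le> norm1 (mat_list_prod d (take m ws)) * norm1 (mat_list_prod d (drop m ws))"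
    using ws(2) mat_list_prod_append[OF c1 c2] norm1_mult_le mat_list_prod_carrier[OF c1]
      mat_list_prod_carrier[OF c2] by (metis append_take_drop_id)
  also have "\<dots> \<le> max_norm1 d S m * max_norm1 d S n"
    by (intro mult_mono max_norm1_ge[OF fin] w1 w2 norm1_nonneg max_norm1_nonneg[OF fin ne])
  finally show ?thesis .
qed

lemma tendsto_jsr_norm1:
  assumes "finite S" "S \<noteq> {}" "S \<subseteq> carrier_mat d d"
  shows "(\<lambda>n. max_norm1 d S n powr (1 / real n)) \<longlonglongrightarrow> jsr_norm1 d S"
  unfolding jsr_norm1_def
  by (rule fekete_submultiplicative) (use max_norm1_nonneg max_norm1_add_le assms in auto)

lemma jsr_norm1_nonneg: "0 \<le> jsr_norm1 d S"
  unfolding jsr_norm1_def by (intro cInf_greatest) auto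

lemma jsr_norm1_le: "1 \<le> n \<Longrightarrow> jsr_norm1 d S \<le> max_norm1 d S n powr (1 / real n)"
  unfolding jsr_norm1_def by (intro cInf_lower bdd_belowI[of _ 0]) auto

lemma jsr_eq_jsr_norm1:
  assumes d: "0 < d" and fin: "finite S" and ne: "S \<noteq> {}" and S: "S \<subseteq> carrier_mat d d"
  shows "jsr d S = jsr_norm1 d S"
proof -
  define f where "f n = (SUP ws \<in> {ws. length ws = n \<and> set ws \<subseteq> S}.
                          mat_fnorm (mat_list_prod d ws) powr (1 / real n))" for n
  define g where "g n = max_norm1 d S n powr (1 / real n)" for n
  define dd where "dd = real d * real d"
  have dd: "0 < dd" unfolding dd_def using d by simp
  have upper: "f n \<le> g n" for n
    unfolding f_def g_def
  proof (rule cSUP_least)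
    show "{ws. length ws = n \<and> set ws \<subseteq> S} \<noteq> {}" using words_nonempty[OF ne] unfolding words_def .
    fix ws assume "ws \<in> {ws. length ws = n \<and> set ws \<subseteq> S}"
    then show "mat_fnorm (mat_list_prod d ws) powr (1 / real n) \<le> max_norm1 d S n powr (1 / real n)"
      using mat_fnorm_le_norm1 max_norm1_ge[OF fin, of ws n d] mat_fnorm_nonneg unfolding words_def
      by (intro powr_mono2) (auto intro: order.trans)
  qed
  have lower: "g n / dd powr (1 / real n) \<le> f n" for n
  proof -
    obtain ws where ws: "ws \<in> words S n" "max_norm1 d S n = norm1 (mat_list_prod d ws)"
      using max_norm1_attained[OF fin ne] .
    have "mat_list_prod d ws \<in> carrier_mat d d"
      using ws S mat_list_prod_carrier unfolding words_def by auto
    then have "max_norm1 d S n / dd \<le> mat_fnorm (mat_list_prod d ws)"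
      using ws(2) norm1_le_mat_fnorm dd unfolding dd_def by (simp add: divide_le_eq mult.commute)
    then have "(max_norm1 d S n / dd) powr (1 / real n) \<le> mat_fnorm (mat_list_prod d ws) powr (1 / real n)"
      using max_norm1_nonneg[OF fin ne] dd by (intro powr_mono2) auto
    also have "\<dots> \<le> f n" unfolding f_def
      by (rule cSUP_upper) (use ws finite_words[OF fin, of n] in \<open>auto simp: words_def\<close>)
    finally show ?thesis
      unfolding g_def using max_norm1_nonneg[OF fin ne] dd by (simp add: powr_divide)
  qed
  have "(\<lambda>n. g n / dd powr (1 / real n)) \<longlonglongrightarrow> jsr_norm1 d S / dd powr 0"
    using dd unfolding g_def by (intro tendsto_intros tendsto_jsr_norm1[OF fin ne S] lim_1_over_n) auto
  then have "(\<lambda>n. g n / dd powr (1 / real n)) \<longlonglongrightarrow> jsr_norm1 d S" using dd by simp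
  then have "f \<longlonglongrightarrow> jsr_norm1 d S"
    by (rule tendsto_sandwich[rotated 2, OF _ tendsto_jsr_norm1[OF fin ne S, folded g_def]])
       (use lower upper in auto)
  then show ?thesis unfolding jsr_def f_def by (rule limI)
qed

lemma spectral_radius_nonneg:
  assumes "P \<in> carrier_mat d d" "0 < d"
  shows "0 \<le> spectral_radius P"
  using spectral_radius_mem_max(1)[OF assms] by auto

lemma powr_root_power:
  assumes "0 \<le> (x::real)" "0 < m" "0 < k"
  shows "(x ^ k) powr (1 / real (m * k)) = x powr (1 / real m)"
proof (cases "x = 0")
  case False
  then have "(x ^ k) powr (1 / real (m * k)) = x powr (real k * (1 / real (m * k)))"
    using assms by (simp add: powr_realpow[symmetric] powr_powr)
  also have "real k * (1 / real (m * k)) = 1 / real m" using assms by simp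
  finally show ?thesis .
qed (use assms in simp)

lemma root_power_cancel: "0 \<le> (x::real) \<Longrightarrow> 1 \<le> n \<Longrightarrow> (x powr (1 / real n)) ^ n = x"
  by (cases "x = 0") (auto simp: powr_realpow[symmetric] powr_powr)

lemma spectral_radius_power_le_max_norm1:
  assumes d: "0 < d" and fin: "finite S" and S: "S \<subseteq> carrier_mat d d" and ws: "set ws \<subseteq> S"
  shows "spectral_radius (mat_list_prod d ws) ^ j \<le> max_norm1 d S (length ws * j)"
proof -
  define P where "P = mat_list_prod d ws"
  have wc: "set ws \<subseteq> carrier_mat d d" using ws S by auto
  have P: "P \<in> carrier_mat d d" unfolding P_def using mat_list_prod_carrier[OF wc] .
  obtain \<mu> where \<mu>: "\<mu> \<in> spectrum P" "cmod \<mu> = spectral_radius P"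
    using spectral_radius_mem_max(1)[OF P d] by auto
  then obtain v where v: "v \<in> carrier_vec d" "v \<noteq> 0\<^sub>v d" "P *\<^sub>v v = \<mu> \<cdot>\<^sub>v v"
    using P unfolding spectrum_def eigenvalue_def eigenvector_def by auto
  have rc: "set (concat (replicate i ws)) \<subseteq> carrier_mat d d" for i using wc by auto
  have pow: "mat_list_prod d (concat (replicate i ws)) *\<^sub>v v = \<mu> ^ i \<cdot>\<^sub>v v" for i
  proof (induction i)
    case 0
    then show ?case using v by simp
  next
    case (Suc i)
    have "mat_list_prod d (concat (replicate (Suc i) ws)) *\<^sub>v v
          = P *\<^sub>v (mat_list_prod d (concat (replicate i ws)) *\<^sub>v v)"
      unfolding P_def using mat_list_prod_append[OF wc rc[of i]] mat_list_prod_carrier[OF rc[of i]] P v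
      by (simp add: P_def assoc_mult_mat_vec)
    also have "\<dots> = \<mu> ^ Suc i \<cdot>\<^sub>v v"
      unfolding Suc using P v by (simp add: mult_mat_vec smult_smult_assoc mult.commute)
    finally show ?case .
  qed
  have "spectral_radius P ^ j = cmod (\<mu> ^ j)" using \<mu> by (simp add: norm_power)
  also have "\<dots> \<le> norm1 (mat_list_prod d (concat (replicate j ws)))"
    by (rule eigenvalue_norm_le_norm1[OF mat_list_prod_carrier[OF rc] v(1,2) pow])
  also have "\<dots> \<le> max_norm1 d S (length ws * j)"
    by (rule max_norm1_ge[OF fin]) (use ws in \<open>auto simp: words_def length_concat sum_list_replicate\<close>)
  finally show ?thesis unfolding P_def .
qed

lemma spectral_radius_root_le_jsr_norm1:
  assumes d: "0 < d" and fin: "finite S" and ne: "S \<noteq> {}" and S: "S \<subseteq> carrier_mat d d"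
    and ws: "ws \<noteq> []" "set ws \<subseteq> S"
  shows "spectral_radius (mat_list_prod d ws) powr (1 / real (length ws)) \<le> jsr_norm1 d S"
proof -
  define \<rho> where "\<rho> = spectral_radius (mat_list_prod d ws)"
  define m where "m = length ws"
  have m: "1 \<le> m" unfolding m_def using ws by (simp add: Suc_leI)
  have \<rho>: "0 \<le> \<rho>"
    unfolding \<rho>_def using ws S by (intro spectral_radius_nonneg[OF mat_list_prod_carrier d]) auto
  have bound: "\<rho> powr (1 / real m) \<le> max_norm1 d S (m * Suc j) powr (1 / real (m * Suc j))" for j
  proof -
    have "\<rho> powr (1 / real m) = (\<rho> ^ Suc j) powr (1 / real (m * Suc j))"
      by (rule powr_root_power[symmetric]) (use \<rho> m in auto)
    also have "\<dots> \<le> max_norm1 d S (m * Suc j) powr (1 / real (m * Suc j))"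
      using spectral_radius_power_le_max_norm1[OF d fin S ws(2), of "Suc j"] \<rho>
      unfolding \<rho>_def m_def by (intro powr_mono2) auto
    finally show ?thesis .
  qed
  have "strict_mono (\<lambda>j. m * Suc j)" using m by (auto simp: strict_mono_def)
  from LIMSEQ_subseq_LIMSEQ[OF tendsto_jsr_norm1[OF fin ne S] this]
  have "(\<lambda>j. max_norm1 d S (m * Suc j) powr (1 / real (m * Suc j))) \<longlonglongrightarrow> jsr_norm1 d S"
    by (simp add: o_def)
  then show ?thesis unfolding \<rho>_def[symmetric] m_def[symmetric]
    by (rule LIMSEQ_le_const) (use bound in auto)
qed

lemma jsr_norm1_le_of_prod_norm1_bounded:
  assumes fin: "finite S" and ne: "S \<noteq> {}" and bounded: "prod_norm1_bounded d S C t"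
    and C: "0 < C" and t: "0 < t"
  shows "jsr_norm1 d S \<le> t"
proof -
  have le: "jsr_norm1 d S \<le> C powr (1 / real n) * t" if n: "1 \<le> n" for n
  proof -
    obtain ws where ws: "ws \<in> words S n" "max_norm1 d S n = norm1 (mat_list_prod d ws)"
      using max_norm1_attained[OF fin ne] .
    have "max_norm1 d S n \<le> C * t ^ n" using ws bounded unfolding words_def prod_norm1_bounded_def by auto
    then have "max_norm1 d S n powr (1 / real n) \<le> (C * t ^ n) powr (1 / real n)"
      using max_norm1_nonneg[OF fin ne] by (intro powr_mono2) auto
    also have "\<dots> = C powr (1 / real n) * t"
      using C t n by (simp add: powr_mult powr_realpow[symmetric] powr_powr)
    finally show ?thesis using jsr_norm1_le[OF n, of d S] by linarith
  qed
  have "(\<lambda>n. C powr (1 / real n) * t) \<longlonglongrightarrow> C powr 0 * t"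
    using C by (intro tendsto_intros lim_1_over_n) auto
  then have "(\<lambda>n. C powr (1 / real n) * t) \<longlonglongrightarrow> t" using C by simp
  then show ?thesis by (rule LIMSEQ_le_const) (use le in auto)
qed

lemma prod_norm1_bounded_of_jsr_norm1_less:
  assumes fin: "finite S" and ne: "S \<noteq> {}" and S: "S \<subseteq> carrier_mat d d"
    and r: "jsr_norm1 d S < r"
  obtains C where "0 \<le> C" "prod_norm1_bounded d S C r"
proof -
  have r0: "0 < r" using r jsr_norm1_nonneg[of d S] by linarith
  obtain N where N: "\<And>n. N \<le> n \<Longrightarrow> max_norm1 d S n powr (1 / real n) < r"
    using order_tendstoD(2)[OF tendsto_jsr_norm1[OF fin ne S] r] by (auto simp: eventually_sequentially)
  define C where "C = (\<Sum>n\<le>N. max_norm1 d S n / r ^ n) + 1"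
  have terms: "0 \<le> max_norm1 d S n / r ^ n" for n using max_norm1_nonneg[OF fin ne] r0 by simp
  have bound: "max_norm1 d S n \<le> C * r ^ n" for n
  proof (cases "N < n")
    case True
    then have n: "1 \<le> n" by simp
    have "max_norm1 d S n = (max_norm1 d S n powr (1 / real n)) ^ n"
      using root_power_cancel[OF max_norm1_nonneg[OF fin ne] n] by simp
    also have "\<dots> \<le> r ^ n" using N[of n] True by (intro power_mono) auto
    also have "\<dots> \<le> C * r ^ n" using r0 terms unfolding C_def by (simp add: sum_nonneg)
    finally show ?thesis .
  next
    case False
    then have "max_norm1 d S n / r ^ n \<le> (\<Sum>n\<le>N. max_norm1 d S n / r ^ n)"
      using terms by (intro member_le_sum) auto
    then have "max_norm1 d S n / r ^ n \<le> C" unfolding C_def by simp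
    then show ?thesis using r0 by (simp add: divide_le_eq)
  qed
  have "prod_norm1_bounded d S C r"
    unfolding prod_norm1_bounded_def
  proof (intro allI impI)
    fix ws assume "set ws \<subseteq> S"
    then have "norm1 (mat_list_prod d ws) \<le> max_norm1 d S (length ws)"
      by (intro max_norm1_ge[OF fin]) (simp add: words_def)
    also have "\<dots> \<le> C * r ^ length ws" by (rule bound)
    finally show "norm1 (mat_list_prod d ws) \<le> C * r ^ length ws" .
  qed
  moreover have "0 \<le> C" unfolding C_def using terms by (simp add: sum_nonneg add_nonneg_nonneg)
  ultimately show ?thesis using that by blast
qed

section \<open>Rank-one matrices as outer products\<close>

lemma (in vec_space) col_in_span_of_rank_le_1:
  assumes M: "M \<in> carrier_mat n n" and r: "rank M \<le> 1"
    and c0: "c0 < n" "col M c0 \<noteq> 0\<^sub>v n" and j: "j < n"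
  shows "\<exists>a. col M j = a \<cdot>\<^sub>v col M c0"
proof -
  define u where "u = col M c0"
  define v where "v = col M j"
  have u: "u \<in> carrier_vec n" and v: "v \<in> carrier_vec n" using M c0 j unfolding u_def v_def by auto
  have "u \<notin> span {}" using span_empty c0 u_def by auto
  then have indpt_u: "lin_indpt {u}"
    using lin_dep_iff_in_span[of "{}" u] u unfolding lin_dep_def by auto
  have "v \<in> span {u}"
  proof (rule ccontr)
    assume v_notin: "v \<notin> span {u}"
    then have "v \<noteq> u" using span_self[OF u] by auto
    have "lin_indpt ({u} \<union> {v})" using lin_dep_iff_in_span[of "{u}" v] indpt_u u v v_notin \<open>v \<noteq> u\<close> by auto
    moreover have "{u} \<union> {v} \<subseteq> set (cols M)" using M j c0 unfolding u_def v_def by (auto simp: cols_def)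
    ultimately have "card ({u} \<union> {v}) \<le> rank M" using rank_ge_card_indpt[OF M] by blast
    with \<open>v \<noteq> u\<close> r show False by auto
  qed
  then obtain a where "lincomb a {u} = v" using finite_in_span[of "{u}" v] u by auto
  then have "v = a u \<cdot>\<^sub>v u" unfolding lincomb_def using u by simp
  then show ?thesis unfolding u_def v_def by blast
qed

lemma (in vec_space) rank_le_1_imp_entries_product:
  assumes M: "M \<in> carrier_mat n n" and r: "rank M \<le> 1"
  obtains x y where "\<And>i j. i < n \<Longrightarrow> j < n \<Longrightarrow> M $$ (i,j) = x i * y j"
proof (cases "\<forall>j<n. col M j = 0\<^sub>v n")
  case True
  have "M $$ (i,j) = 0" if "i < n" "j < n" for i j
  proof -
    have "M $$ (i,j) = col M j $ i" using M that by simp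
    then show ?thesis using True that by simp
  qed
  then show ?thesis by (intro that[of "\<lambda>_. 0" "\<lambda>_. 0"]) simp
next
  case False
  then obtain c0 where c0: "c0 < n" "col M c0 \<noteq> 0\<^sub>v n" by auto
  have "\<forall>j. \<exists>a. j < n \<longrightarrow> col M j = a \<cdot>\<^sub>v col M c0"
    using col_in_span_of_rank_le_1[OF M r c0] by auto
  from choice[OF this] obtain y where y: "\<And>j. j < n \<Longrightarrow> col M j = y j \<cdot>\<^sub>v col M c0" by blast
  have "M $$ (i,j) = col M c0 $ i * y j" if "i < n" "j < n" for i j
  proof -
    have "M $$ (i,j) = col M j $ i" using M that by simp
    then show ?thesis using y[of j] M c0 that by (simp add: mult.commute)
  qed
  then show ?thesis by (intro that[of "\<lambda>i. col M c0 $ i" y])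
qed

definition outer_mat :: "nat \<Rightarrow> (nat \<Rightarrow> complex) \<Rightarrow> (nat \<Rightarrow> complex) \<Rightarrow> complex mat" where
  "outer_mat d x y = mat d d (\<lambda>(i,j). x i * y j)"

definition vec_mat :: "nat \<Rightarrow> (nat \<Rightarrow> complex) \<Rightarrow> complex mat \<Rightarrow> nat \<Rightarrow> complex" where
  "vec_mat d y P j = (\<Sum>i<d. y i * P $$ (i,j))"

definition dotp :: "nat \<Rightarrow> (nat \<Rightarrow> complex) \<Rightarrow> (nat \<Rightarrow> complex) \<Rightarrow> complex" where
  "dotp d z x = (\<Sum>j<d. z j * x j)"

lemma mat_rank_le_1_imp_outer_mat:
  assumes "M \<in> carrier_mat d d" "mat_rank d M \<le> 1"
  obtains x y where "M = outer_mat d x y"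
proof -
  obtain x y where "\<And>i j. i < d \<Longrightarrow> j < d \<Longrightarrow> M $$ (i,j) = x i * y j"
    using vec_space.rank_le_1_imp_entries_product assms unfolding mat_rank_def by blast
  then have "M = outer_mat d x y" unfolding outer_mat_def using assms(1) by (intro eq_matI) auto
  then show ?thesis using that by blast
qed

lemma outer_mat_carrier [simp]: "outer_mat d x y \<in> carrier_mat d d"
  unfolding outer_mat_def by simp

lemma dim_outer_mat [simp]: "dim_row (outer_mat d x y) = d" "dim_col (outer_mat d x y) = d"
  unfolding outer_mat_def by simp_all

lemma outer_mat_mult_outer_mat: "outer_mat d x y * outer_mat d x' y' = dotp d y x' \<cdot>\<^sub>m outer_mat d x y'"
  unfolding outer_mat_def dotp_def
  by (rule eq_matI) (auto simp: scalar_prod_def row_def col_def lessThan_atLeast0 sum_distrib_left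
      sum_distrib_right mult_ac intro!: sum.cong)

lemma outer_mat_mult:
  "P \<in> carrier_mat d d \<Longrightarrow> outer_mat d x y * P = outer_mat d x (vec_mat d y P)"
  unfolding outer_mat_def vec_mat_def
  by (intro eq_matI) (auto simp: scalar_prod_def row_def col_def lessThan_atLeast0 sum_distrib_left
      mult_ac intro!: sum.cong)

lemma outer_mat_mult_vec: "outer_mat d x y *\<^sub>v vec d x' = dotp d y x' \<cdot>\<^sub>v vec d x"
  unfolding outer_mat_def dotp_def
  by (rule eq_vecI) (auto simp: scalar_prod_def row_def lessThan_atLeast0 sum_distrib_left mult_ac
      intro!: sum.cong)

lemma norm1_outer_mat: "norm1 (outer_mat d x y) = vnorm1 d x * vnorm1 d y"
  unfolding norm1_def vnorm1_def outer_mat_def by (simp add: norm_mult sum_product)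

lemma vnorm1_vec_mat_le:
  assumes "P \<in> carrier_mat d d"
  shows "vnorm1 d (vec_mat d y P) \<le> vnorm1 d y * norm1 P"
proof -
  have "vnorm1 d (vec_mat d y P) \<le> (\<Sum>j<d. \<Sum>i<d. cmod (y i) * cmod (P $$ (i,j)))"
    unfolding vnorm1_def vec_mat_def
    by (intro sum_mono) (auto intro!: order.trans[OF norm_sum] simp: norm_mult)
  also have "\<dots> = (\<Sum>i<d. cmod (y i) * (\<Sum>j<d. cmod (P $$ (i,j))))"
    by (subst sum.swap) (simp add: sum_distrib_left)
  also have "\<dots> \<le> (\<Sum>i<d. cmod (y i) * norm1 P)"
    using assms row_norm1_le[of _ P] by (intro sum_mono mult_left_mono) auto
  also have "\<dots> = vnorm1 d y * norm1 P" unfolding vnorm1_def by (simp add: sum_distrib_right)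
  finally show ?thesis .
qed

lemma norm_dotp_le: "cmod (dotp d z x) \<le> vnorm1 d z * vnorm1 d x"
proof -
  have "cmod (dotp d z x) \<le> (\<Sum>j<d. cmod (z j) * cmod (x j))"
    unfolding dotp_def by (auto intro!: order.trans[OF norm_sum] simp: norm_mult)
  also have "\<dots> \<le> (\<Sum>j<d. cmod (z j) * vnorm1 d x)"
    by (intro sum_mono mult_left_mono vnorm1_ge) auto
  also have "\<dots> = vnorm1 d z * vnorm1 d x" unfolding vnorm1_def by (simp add: sum_distrib_right)
  finally show ?thesis .
qed

lemma one_smult_mat [simp]: "1 \<cdot>\<^sub>m (M :: complex mat) = M"
  by (rule eq_matI) auto

lemma smult_smult_mat: "a \<cdot>\<^sub>m (b \<cdot>\<^sub>m M) = (a * b) \<cdot>\<^sub>m (M :: complex mat)"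
  by (rule eq_matI) auto

lemma smult_mat_mult_vec: "dim_vec v = dim_col M \<Longrightarrow> ((c :: complex) \<cdot>\<^sub>m M) *\<^sub>v v = c \<cdot>\<^sub>v (M *\<^sub>v v)"
  by (rule eq_vecI) (auto simp: scalar_prod_def sum_distrib_left mult_ac row_def intro!: sum.cong)

section \<open>Weights of paths and cycles\<close>

fun path_weight :: "('v \<Rightarrow> 'v \<Rightarrow> 'a :: comm_monoid_mult) \<Rightarrow> 'v list \<Rightarrow> 'a" where
  "path_weight e [] = 1"
| "path_weight e [a] = 1"
| "path_weight e (a # b # ps) = e a b * path_weight e (b # ps)"

definition cycle_weight :: "('v \<Rightarrow> 'v \<Rightarrow> 'a :: comm_monoid_mult) \<Rightarrow> 'v list \<Rightarrow> 'a" where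
  "cycle_weight e ps = path_weight e (ps @ [hd ps])"

lemma path_weight_Cons: "path_weight e (a # ps) = (if ps = [] then 1 else e a (hd ps) * path_weight e ps)"
  by (cases ps) auto

lemma path_weight_append: "path_weight e (xs @ [y]) * path_weight e (y # ys) = path_weight e (xs @ y # ys)"
proof (induction xs)
  case (Cons a xs)
  then show ?case by (simp add: path_weight_Cons hd_append mult.assoc)
qed simp

lemma path_weight_snoc:
  assumes "ps \<noteq> []"
  shows "path_weight e (ps @ [b]) = path_weight e ps * e (last ps) b"
proof -
  obtain xs y where "ps = xs @ [y]" using assms by (metis rev_exhaust)
  then show ?thesis using path_weight_append[of e xs y "[b]"] by simp
qed

text \<open>In the application the weight of an edge depends on its target only through a key
  of the target; this is what lets a path be cut at two vertices with the same key.\<close>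

lemma path_weight_snoc_cong:
  assumes key: "\<And>a b b'. key b = key b' \<Longrightarrow> e a b = e a b'" and "key y = key y'"
  shows "path_weight e (xs @ [y]) = path_weight e (xs @ [y'])"
proof (induction xs)
  case (Cons a xs)
  then show ?case using key[OF assms(2)] by (cases xs) (auto simp: path_weight_Cons)
qed simp

lemma path_weight_split_cycle:
  assumes key: "\<And>a b b'. key b = key b' \<Longrightarrow> e a b = e a b'" and k: "key y = key y'"
  shows "path_weight e (xs @ y # ys @ y' # zs) = cycle_weight e (y # ys) * path_weight e (xs @ y' # zs)"
proof -
  have "path_weight e (xs @ y # ys @ y' # zs)
        = path_weight e (xs @ [y]) * (path_weight e ((y # ys) @ [y']) * path_weight e (y' # zs))"
    using path_weight_append[of e xs y "ys @ y' # zs"] path_weight_append[of e "y # ys" y' zs] by simp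
  also have "path_weight e ((y # ys) @ [y']) = cycle_weight e (y # ys)"
    unfolding cycle_weight_def using path_weight_snoc_cong[where key = key and e = e and xs = "y # ys", OF key k[symmetric]] by simp
  also have "path_weight e (xs @ [y]) = path_weight e (xs @ [y'])"
    using path_weight_snoc_cong[where key = key and e = e, OF key k] .
  finally show ?thesis using path_weight_append[of e xs y' zs] by (simp add: mult_ac)
qed

lemma cycle_weight_split_cycle:
  assumes key: "\<And>a b b'. key b = key b' \<Longrightarrow> e a b = e a b'" and k: "key y = key y'"
  shows "cycle_weight e (xs @ y # ys @ y' # zs) = cycle_weight e (y # ys) * cycle_weight e (xs @ y' # zs)"
proof -
  let ?h = "hd (xs @ y # ys @ y' # zs)"
  have "cycle_weight e (xs @ y # ys @ y' # zs) = path_weight e (xs @ y # ys @ y' # (zs @ [?h]))"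
    unfolding cycle_weight_def by simp
  also have "\<dots> = cycle_weight e (y # ys) * path_weight e (xs @ y' # zs @ [?h])"
    by (rule path_weight_split_cycle[where key = key and e = e, OF key k])
  also have "path_weight e (xs @ y' # zs @ [?h]) = cycle_weight e (xs @ y' # zs)"
    using path_weight_snoc_cong[where key = key and e = e and xs = "y' # zs", OF key k] by (cases xs) (auto simp: cycle_weight_def)
  finally show ?thesis .
qed

lemma not_distinct_map_decomp:
  "\<not> distinct (map key ps) \<Longrightarrow> \<exists>xs y ys y' zs. ps = xs @ y # ys @ y' # zs \<and> key y = key y'"
proof (induction ps)
  case (Cons a ps)
  show ?case
  proof (cases "distinct (map key ps)")
    case True
    with Cons.prems obtain y' where y': "y' \<in> set ps" "key a = key y'" by auto
    then obtain ys zs where "ps = ys @ y' # zs" by (meson split_list)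
    then show ?thesis using y' by (intro exI[of _ "[]"]) auto
  next
    case False
    then obtain xs y ys y' zs where "ps = xs @ y # ys @ y' # zs" "key y = key y'"
      using Cons.IH by blast
    then show ?thesis by (intro exI[of _ "a # xs"]) auto
  qed
qed simp

lemma norm_cycle_weight_le_of_simple:
  fixes e :: "'v \<Rightarrow> 'v \<Rightarrow> 'a :: real_normed_field" and T :: real
  assumes key: "\<And>a b b'. key b = key b' \<Longrightarrow> e a b = e a b'" and T: "0 < T"
    and simple: "\<And>ps. ps \<noteq> [] \<Longrightarrow> set ps \<subseteq> V \<Longrightarrow> distinct (map key ps) \<Longrightarrow>
                   norm (cycle_weight e ps) \<le> T ^ sum_list (map len ps)"
  shows "ps \<noteq> [] \<Longrightarrow> set ps \<subseteq> V \<Longrightarrow> norm (cycle_weight e ps) \<le> T ^ sum_list (map len ps)"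
proof (induction "length ps" arbitrary: ps rule: less_induct)
  case less
  show ?case
  proof (cases "distinct (map key ps)")
    case True
    then show ?thesis using simple less.prems by blast
  next
    case False
    then obtain xs y ys y' zs where ps: "ps = xs @ y # ys @ y' # zs" and k: "key y = key y'"
      using not_distinct_map_decomp by blast
    have "cycle_weight e ps = cycle_weight e (y # ys) * cycle_weight e (xs @ y' # zs)"
      unfolding ps by (rule cycle_weight_split_cycle[where key = key, OF key k])
    then have "norm (cycle_weight e ps) = norm (cycle_weight e (y # ys)) * norm (cycle_weight e (xs @ y' # zs))"
      by (simp add: norm_mult)
    also have "\<dots> \<le> T ^ sum_list (map len (y # ys)) * T ^ sum_list (map len (xs @ y' # zs))"
      by (intro mult_mono less.hyps) (use ps less.prems T in auto)
    also have "\<dots> = T ^ sum_list (map len ps)" unfolding ps by (simp add: power_add[symmetric] algebra_simps)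
    finally show ?thesis .
  qed
qed

lemma norm_path_weight_le_length:
  fixes e :: "'v \<Rightarrow> 'v \<Rightarrow> 'a :: real_normed_field" and T D :: real
  assumes T: "0 < T" and edge: "\<And>a b. a \<in> V \<Longrightarrow> b \<in> V \<Longrightarrow> norm (e a b) \<le> D * T ^ len a"
  shows "ps \<noteq> [] \<Longrightarrow> set ps \<subseteq> V \<Longrightarrow>
    norm (path_weight e ps) * T ^ len (last ps) \<le> max 1 D ^ length ps * T ^ sum_list (map len ps)"
proof (induction ps)
  case (Cons a ps)
  show ?case
  proof (cases ps)
    case (Cons b qs)
    have "norm (e a b) \<le> D * T ^ len a" using edge[of a b] Cons.prems \<open>ps = b # qs\<close> by simp
    also have "\<dots> \<le> max 1 D * T ^ len a" using T by (intro mult_right_mono) auto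
    finally have ab: "norm (e a b) \<le> max 1 D * T ^ len a" .
    have "norm (path_weight e (a # ps)) * T ^ len (last (a # ps))
          = norm (e a b) * (norm (path_weight e ps) * T ^ len (last ps))"
      using Cons by (simp add: norm_mult)
    also have "\<dots> \<le> (max 1 D * T ^ len a) * (max 1 D ^ length ps * T ^ sum_list (map len ps))"
      by (rule mult_mono[OF ab Cons.IH]) (use Cons.prems \<open>ps = b # qs\<close> T in auto)
    also have "\<dots> = max 1 D ^ length (a # ps) * T ^ sum_list (map len (a # ps))"
      by (simp add: power_add algebra_simps)
    finally show ?thesis .
  qed (use T in simp)
qed simp

lemma norm_path_weight_le:
  fixes e :: "'v \<Rightarrow> 'v \<Rightarrow> 'a :: real_normed_field" and T D :: real
  assumes key: "\<And>a b b'. key b = key b' \<Longrightarrow> e a b = e a b'" and T: "0 < T"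
    and edge: "\<And>a b. a \<in> V \<Longrightarrow> b \<in> V \<Longrightarrow> norm (e a b) \<le> D * T ^ len a"
    and cycle: "\<And>ps. ps \<noteq> [] \<Longrightarrow> set ps \<subseteq> V \<Longrightarrow> norm (cycle_weight e ps) \<le> T ^ sum_list (map len ps)"
    and fin: "finite (key ` V)"
  shows "ps \<noteq> [] \<Longrightarrow> set ps \<subseteq> V \<Longrightarrow>
    norm (path_weight e ps) * T ^ len (last ps) \<le> max 1 D ^ card (key ` V) * T ^ sum_list (map len ps)"
proof (induction "length ps" arbitrary: ps rule: less_induct)
  case less
  show ?case
  proof (cases "distinct (map key ps)")
    case True
    have "length ps = card (set (map key ps))" using distinct_card[OF True] by simp
    also have "\<dots> \<le> card (key ` V)" using less.prems fin by (intro card_mono) auto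
    finally have len: "length ps \<le> card (key ` V)" .
    have "norm (path_weight e ps) * T ^ len (last ps) \<le> max 1 D ^ length ps * T ^ sum_list (map len ps)"
      by (rule norm_path_weight_le_length[OF T edge less.prems]) auto
    also have "\<dots> \<le> max 1 D ^ card (key ` V) * T ^ sum_list (map len ps)"
      using T len by (intro mult_right_mono power_increasing) auto
    finally show ?thesis .
  next
    case False
    then obtain xs y ys y' zs where ps: "ps = xs @ y # ys @ y' # zs" and k: "key y = key y'"
      using not_distinct_map_decomp by blast
    have last: "last ps = last (xs @ y' # zs)" unfolding ps by (cases zs) auto
    have "path_weight e ps = cycle_weight e (y # ys) * path_weight e (xs @ y' # zs)"
      unfolding ps by (rule path_weight_split_cycle[where key = key, OF key k])
    then have "norm (path_weight e ps) * T ^ len (last ps)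
        = norm (cycle_weight e (y # ys)) * (norm (path_weight e (xs @ y' # zs)) * T ^ len (last (xs @ y' # zs)))"
      unfolding last by (simp add: norm_mult)
    also have "\<dots> \<le> T ^ sum_list (map len (y # ys)) *
                     (max 1 D ^ card (key ` V) * T ^ sum_list (map len (xs @ y' # zs)))"
      by (intro mult_mono cycle less.hyps) (use ps less.prems T in auto)
    also have "\<dots> = max 1 D ^ card (key ` V) * T ^ sum_list (map len ps)"
      unfolding ps by (simp add: power_add algebra_simps)
    finally show ?thesis .
  qed
qed

lemma norm_cycle_weight_le_length:
  fixes e :: "'v \<Rightarrow> 'v \<Rightarrow> 'a :: real_normed_field" and T D :: real
  assumes T: "0 < T" and edge: "\<And>a b. a \<in> V \<Longrightarrow> b \<in> V \<Longrightarrow> norm (e a b) \<le> D * T ^ len a"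
    and ps: "ps \<noteq> []" "set ps \<subseteq> V"
  shows "norm (cycle_weight e ps) \<le> max 1 D ^ Suc (length ps) * T ^ sum_list (map len ps)"
proof -
  have "norm (path_weight e (ps @ [hd ps])) * T ^ len (last (ps @ [hd ps])) \<le>
        max 1 D ^ length (ps @ [hd ps]) * T ^ sum_list (map len (ps @ [hd ps]))"
    by (rule norm_path_weight_le_length[OF T edge]) (use ps in auto)
  then have "norm (cycle_weight e ps) * T ^ len (hd ps)
             \<le> (max 1 D ^ Suc (length ps) * T ^ sum_list (map len ps)) * T ^ len (hd ps)"
    unfolding cycle_weight_def by (simp add: power_add algebra_simps)
  then show ?thesis using T by simp
qed

lemma prod_norm1_bounded_mono:
  "prod_norm1_bounded d S C r \<Longrightarrow> 0 \<le> C \<Longrightarrow> 0 \<le> r \<Longrightarrow> r \<le> t \<Longrightarrow> prod_norm1_bounded d S C t"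
  unfolding prod_norm1_bounded_def
  by (meson mult_left_mono order.trans power_mono)

lemma eventually_mult_power_le_power:
  fixes Q r t :: real
  assumes "0 < r" "r < t"
  shows "eventually (\<lambda>L. Q * r ^ L \<le> t ^ L) sequentially"
proof -
  have "(\<lambda>L. Q * (r / t) ^ L) \<longlonglongrightarrow> Q * 0"
    using assms by (intro tendsto_intros LIMSEQ_power_zero) auto
  then have "eventually (\<lambda>L. Q * (r / t) ^ L < 1) sequentially"
    by (intro order_tendstoD(2)) auto
  then show ?thesis
  proof eventually_elim
    case (elim L)
    have "Q * r ^ L = Q * (r / t) ^ L * t ^ L" using assms by (simp add: power_divide)
    also have "\<dots> \<le> 1 * t ^ L" using elim assms by (intro mult_right_mono) auto
    finally show ?case by simp
  qed
qed

section \<open>Words cut into blocks at the factors of rank at most one\<close>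

locale rank_one_factorization =
  fixes d :: nat and A :: "complex mat set" and xf yf :: "complex mat \<Rightarrow> nat \<Rightarrow> complex"
  assumes d_pos: "0 < d" and finite_A: "finite A" and A_nonempty: "A \<noteq> {}"
    and A_carrier: "A \<subseteq> carrier_mat d d"
    and factor: "\<And>M. M \<in> A \<Longrightarrow> mat_rank d M \<le> 1 \<Longrightarrow> M = outer_mat d (xf M) (yf M)"
begin

abbreviation mprod :: "complex mat list \<Rightarrow> complex mat" where
  "mprod \<equiv> mat_list_prod d"

definition low :: "complex mat set" where
  "low = {M \<in> A. mat_rank d M \<le> 1}"

definition high :: "complex mat set" where
  "high = {M \<in> A. 2 \<le> mat_rank d M}"

definition blocks :: "(complex mat \<times> complex mat list) set" where
  "blocks = {(M, W). M \<in> low \<and> set W \<subseteq> high}"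

definition concat_blocks :: "(complex mat \<times> complex mat list) list \<Rightarrow> complex mat list" where
  "concat_blocks ps = concat (map (\<lambda>(M, W). M # W) ps)"

definition block_length :: "complex mat \<times> complex mat list \<Rightarrow> nat" where
  "block_length a = Suc (length (snd a))"

text \<open>Multiplying the block \<open>x y\<^sup>T W\<close> by the block \<open>x' y'\<^sup>T W'\<close> produces the scalar \<open>y\<^sup>T W x'\<close>.\<close>

definition link :: "complex mat \<times> complex mat list \<Rightarrow> complex mat \<times> complex mat list \<Rightarrow> complex" where
  "link a b = dotp d (vec_mat d (yf (fst a)) (mprod (snd a))) (xf (fst b))"

definition admissible :: "complex mat list \<Rightarrow> bool" where
  "admissible ws \<longleftrightarrow> 1 \<le> length ws \<and> set ws \<subseteq> A \<and>
     (\<forall>M\<in>A. mat_rank d M = 1 \<longrightarrow> count_list ws M \<le> 1)"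

definition rate :: "complex mat list \<Rightarrow> real" where
  "rate ws = spectral_radius (mprod ws) powr (1 / real (length ws))"

definition xsum :: real where
  "xsum = (\<Sum>M\<in>low. vnorm1 d (xf M))"

definition ysum :: real where
  "ysum = (\<Sum>M\<in>low. vnorm1 d (yf M))"

lemma A_eq_low_Un_high: "A = low \<union> high"
  unfolding low_def high_def by auto

lemma finite_low: "finite low"
  unfolding low_def using finite_A by auto

lemma finite_high: "finite high"
  unfolding high_def using finite_A by auto

lemma high_carrier: "high \<subseteq> carrier_mat d d"
  unfolding high_def using A_carrier by auto

lemma concat_blocks_Nil [simp]: "concat_blocks [] = []"
  unfolding concat_blocks_def by simp

lemma concat_blocks_Cons [simp]: "concat_blocks ((M, W) # ps) = M # W @ concat_blocks ps"
  unfolding concat_blocks_def by simp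

lemma set_concat_blocks_subset: "set ps \<subseteq> blocks \<Longrightarrow> set (concat_blocks ps) \<subseteq> A"
  by (induction ps) (auto simp: blocks_def low_def high_def)

lemma mprod_carrier: "set ws \<subseteq> A \<Longrightarrow> mprod ws \<in> carrier_mat d d"
  using A_carrier by (intro mat_list_prod_carrier) auto

lemma sum_list_block_length: "sum_list (map block_length ps) = length (concat_blocks ps)"
  by (induction ps) (auto simp: block_length_def)

lemma link_cong: "fst b = fst b' \<Longrightarrow> link a b = link a b'"
  unfolding link_def by simp

lemma mprod_concat_blocks:
  "ps \<noteq> [] \<Longrightarrow> set ps \<subseteq> blocks \<Longrightarrow> mprod (concat_blocks ps) =
     path_weight link ps \<cdot>\<^sub>m outer_mat d (xf (fst (hd ps))) (vec_mat d (yf (fst (last ps))) (mprod (snd (last ps))))"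
proof (induction ps)
  case (Cons a rest)
  obtain M W where a: "a = (M, W)" by fastforce
  have M: "M \<in> A" "mat_rank d M \<le> 1" and W: "set W \<subseteq> A"
    using Cons.prems a by (auto simp: blocks_def low_def high_def)
  have block: "M * mprod W = outer_mat d (xf M) (vec_mat d (yf M) (mprod W))"
    using factor[OF M] outer_mat_mult[OF mprod_carrier[OF W]] by metis
  show ?case
  proof (cases rest)
    case Nil
    then show ?thesis using a block by simp
  next
    case (Cons b rest')
    let ?z = "vec_mat d (yf (fst (last rest))) (mprod (snd (last rest)))"
    have rest: "set (concat_blocks rest) \<subseteq> A" using Cons.prems set_concat_blocks_subset[of rest] by auto
    have "mprod (concat_blocks (a # rest)) = (M * mprod W) * mprod (concat_blocks rest)"
      using a M(1) A_carrier mprod_carrier[OF W] mprod_carrier[OF rest]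
        mat_list_prod_append[of W d "concat_blocks rest"] W rest
      by (auto simp: assoc_mult_mat[of M d d _ d _ d])
    also have "\<dots> = outer_mat d (xf M) (vec_mat d (yf M) (mprod W)) *
                    (path_weight link rest \<cdot>\<^sub>m outer_mat d (xf (fst b)) ?z)"
      unfolding block using Cons.IH Cons.prems \<open>rest = b # rest'\<close> by auto
    also have "\<dots> = path_weight link (a # rest) \<cdot>\<^sub>m outer_mat d (xf M) ?z"
      using \<open>rest = b # rest'\<close> a
      by (auto simp: mult_smult_distrib[of _ d d _ d] outer_mat_mult_outer_mat smult_smult_mat link_def
          mult.commute)
    finally show ?thesis using a \<open>rest = b # rest'\<close> by simp
  qed
qed simp

text \<open>The first vector \<open>x\<close> of a cycle of blocks is an eigenvector of its product, with the
  weight of the cycle as eigenvalue.\<close>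

lemma norm_cycle_weight_le_spectral_radius:
  assumes ps: "ps \<noteq> []" "set ps \<subseteq> blocks"
  shows "cmod (cycle_weight link ps) \<le> spectral_radius (mprod (concat_blocks ps))"
proof -
  let ?x = "xf (fst (hd ps))"
  let ?z = "vec_mat d (yf (fst (last ps))) (mprod (snd (last ps)))"
  have P: "mprod (concat_blocks ps) \<in> carrier_mat d d" using set_concat_blocks_subset[OF ps(2)] by (rule mprod_carrier)
  have cw: "cycle_weight link ps = path_weight link ps * dotp d ?z ?x"
    unfolding cycle_weight_def path_weight_snoc[OF ps(1)] link_def by simp
  have ev: "mprod (concat_blocks ps) *\<^sub>v vec d ?x = cycle_weight link ps \<cdot>\<^sub>v vec d ?x"
    unfolding mprod_concat_blocks[OF ps] cw
    by (subst smult_mat_mult_vec) (auto simp: outer_mat_mult_vec smult_smult_assoc)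
  show ?thesis
  proof (cases "vec d ?x = 0\<^sub>v d")
    case True
    then have "dotp d ?z ?x = 0" unfolding dotp_def by (auto simp: vec_eq_iff)
    then show ?thesis using cw spectral_radius_nonneg[OF P d_pos] by simp
  next
    case False
    then have "eigenvector (mprod (concat_blocks ps)) (vec d ?x) (cycle_weight link ps)"
      unfolding eigenvector_def using ev P by auto
    then have "cycle_weight link ps \<in> spectrum (mprod (concat_blocks ps))"
      unfolding spectrum_def eigenvalue_def by auto
    then show ?thesis using spectral_radius_mem_max(2)[OF P d_pos] by auto
  qed
qed

lemma count_list_concat_blocks:
  "set ps \<subseteq> blocks \<Longrightarrow> M \<notin> high \<Longrightarrow> count_list (concat_blocks ps) M = count_list (map fst ps) M"
proof (induction ps)
  case (Cons a ps)
  obtain N W where a: "a = (N, W)" by fastforce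
  then have "count_list W M = 0" using Cons.prems by (auto simp: blocks_def count_list_0_iff)
  then show ?case using Cons a by auto
qed simp

lemma admissible_concat_blocks:
  assumes ps: "ps \<noteq> []" "set ps \<subseteq> blocks" and simple: "distinct (map fst ps)"
  shows "admissible (concat_blocks ps)"
proof -
  have "1 \<le> length (concat_blocks ps)"
    using ps(1) by (cases ps) (auto simp: concat_blocks_def split: prod.splits)
  moreover have "count_list (concat_blocks ps) M \<le> 1" if "mat_rank d M = 1" for M
  proof -
    have "M \<notin> high" using that unfolding high_def by auto
    then have "count_list (concat_blocks ps) M = count_list (map fst ps) M"
      using count_list_concat_blocks[OF ps(2)] by simp
    also have "\<dots> \<le> 1" using simple by (induction ps) (auto simp: count_list_0_iff)
    finally show ?thesis .
  qed
  ultimately show ?thesis unfolding admissible_def using set_concat_blocks_subset[OF ps(2)] by auto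
qed

lemma word_eq_high_concat_blocks:
  "set u \<subseteq> A \<Longrightarrow> \<exists>W ps. u = W @ concat_blocks ps \<and> set W \<subseteq> high \<and> set ps \<subseteq> blocks"
proof (induction u)
  case Nil
  show ?case by (intro exI[of _ "[]"]) auto
next
  case (Cons M u)
  then obtain W ps where u: "u = W @ concat_blocks ps" "set W \<subseteq> high" "set ps \<subseteq> blocks" by auto
  show ?case
  proof (cases "M \<in> high")
    case True
    then show ?thesis using u by (intro exI[of _ "M # W"] exI[of _ ps]) auto
  next
    case False
    then have "M \<in> low" using Cons.prems A_eq_low_Un_high by auto
    then show ?thesis using u by (intro exI[of _ "[]"] exI[of _ "(M, W) # ps"]) (auto simp: blocks_def)
  qed
qed

lemma vnorm1_xf_le: "M \<in> low \<Longrightarrow> vnorm1 d (xf M) \<le> xsum"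
  unfolding xsum_def using finite_low by (intro member_le_sum) (auto simp: vnorm1_nonneg)

lemma vnorm1_yf_le: "M \<in> low \<Longrightarrow> vnorm1 d (yf M) \<le> ysum"
  unfolding ysum_def using finite_low by (intro member_le_sum) (auto simp: vnorm1_nonneg)

lemma xsum_nonneg: "0 \<le> xsum"
  unfolding xsum_def by (intro sum_nonneg) (auto simp: vnorm1_nonneg)

lemma ysum_nonneg: "0 \<le> ysum"
  unfolding ysum_def by (intro sum_nonneg) (auto simp: vnorm1_nonneg)

lemma vnorm1_vec_mat_block_le:
  assumes bounded: "prod_norm1_bounded d high C T" and C: "0 \<le> C" and a: "a \<in> blocks"
  shows "vnorm1 d (vec_mat d (yf (fst a)) (mprod (snd a))) \<le> ysum * (C * T ^ length (snd a))"
proof -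
  have W: "set (snd a) \<subseteq> high" and M: "fst a \<in> low" using a by (auto simp: blocks_def)
  have "vnorm1 d (vec_mat d (yf (fst a)) (mprod (snd a))) \<le> vnorm1 d (yf (fst a)) * norm1 (mprod (snd a))"
    using W high_carrier by (intro vnorm1_vec_mat_le mat_list_prod_carrier) auto
  also have "\<dots> \<le> ysum * (C * T ^ length (snd a))"
    using bounded W vnorm1_yf_le[OF M] unfolding prod_norm1_bounded_def
    by (intro mult_mono) (auto simp: ysum_nonneg norm1_nonneg)
  finally show ?thesis .
qed

lemma norm_link_le:
  assumes bounded: "prod_norm1_bounded d high C T" and C: "0 \<le> C" and T: "0 < T"
    and a: "a \<in> blocks" and b: "b \<in> blocks"
  shows "cmod (link a b) \<le> (xsum * ysum * C / T) * T ^ block_length a"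
proof -
  have "cmod (link a b) \<le> vnorm1 d (vec_mat d (yf (fst a)) (mprod (snd a))) * vnorm1 d (xf (fst b))"
    unfolding link_def by (rule norm_dotp_le)
  also have "\<dots> \<le> ysum * (C * T ^ length (snd a)) * xsum"
    using vnorm1_vec_mat_block_le[OF bounded C a] vnorm1_xf_le b T C
    by (intro mult_mono) (auto simp: blocks_def vnorm1_nonneg ysum_nonneg)
  also have "\<dots> = (xsum * ysum * C / T) * T ^ block_length a"
    using T unfolding block_length_def by (simp add: field_simps)
  finally show ?thesis .
qed

lemma high_prod_norm1_bounded:
  assumes gap: "high = {} \<or> jsr d high < jsr d A" and pos: "0 < jsr_norm1 d A"
  obtains r C where "0 < r" "r < jsr_norm1 d A" "0 \<le> C" "prod_norm1_bounded d high C r"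
proof (cases "high = {}")
  case True
  have "prod_norm1_bounded d high (real d) (jsr_norm1 d A / 2)"
    using True by (simp add: prod_norm1_bounded_def norm1_one_mat)
  then show ?thesis by (intro that) (use pos in auto)
next
  case False
  have "jsr_norm1 d high < jsr_norm1 d A"
    using gap False jsr_eq_jsr_norm1[OF d_pos finite_high False high_carrier]
      jsr_eq_jsr_norm1[OF d_pos finite_A A_nonempty A_carrier] by simp
  moreover define r where "r = (jsr_norm1 d high + jsr_norm1 d A) / 2"
  ultimately have r: "jsr_norm1 d high < r" "r < jsr_norm1 d A" by auto
  then have "0 < r" using jsr_norm1_nonneg[of d high] by linarith
  with r show ?thesis
    using that prod_norm1_bounded_of_jsr_norm1_less[OF finite_high False high_carrier r(1)] by blast
qed

lemma simple_cycle_weight_le: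
  assumes bounded: "prod_norm1_bounded d high C r" and C: "0 \<le> C" and r: "0 < r"
  obtains Q where "\<And>ps. ps \<noteq> [] \<Longrightarrow> set ps \<subseteq> blocks \<Longrightarrow> distinct (map fst ps) \<Longrightarrow>
    cmod (cycle_weight link ps) \<le> Q * r ^ length (concat_blocks ps)"
proof
  define D where "D = xsum * ysum * C / r"
  fix ps assume ps: "ps \<noteq> []" "set ps \<subseteq> blocks" "distinct (map fst ps)"
  have "length ps = card (set (map fst ps))" using distinct_card[OF ps(3)] by simp
  also have "\<dots> \<le> card low" using ps(2) finite_low by (intro card_mono) (auto simp: blocks_def)
  finally have len: "length ps \<le> card low" .
  have "cmod (cycle_weight link ps) \<le> max 1 D ^ Suc (length ps) * r ^ sum_list (map block_length ps)"
    unfolding D_def by (rule norm_cycle_weight_le_length[OF r norm_link_le[OF bounded C r] ps(1,2)])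
  also have "\<dots> \<le> max 1 D ^ Suc (card low) * r ^ length (concat_blocks ps)"
    unfolding sum_list_block_length using len r by (intro mult_right_mono power_increasing) auto
  finally show "cmod (cycle_weight link ps) \<le> max 1 D ^ Suc (card low) * r ^ length (concat_blocks ps)" .
qed

lemma finite_short_admissible: "finite {ws. admissible ws \<and> length ws < L}"
proof (rule finite_subset)
  show "{ws. admissible ws \<and> length ws < L} \<subseteq> (\<Union>n<L. words A n)"
    unfolding admissible_def words_def by auto
  show "finite (\<Union>n<L. words A n)" using finite_words[OF finite_A] by auto
qed

lemma spectral_radius_eq_rate_power:
  "admissible ws \<Longrightarrow> spectral_radius (mprod ws) = rate ws ^ length ws"
  unfolding rate_def admissible_def
  by (simp add: root_power_cancel spectral_radius_nonneg[OF mprod_carrier d_pos])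

lemma short_admissible_rate_le:
  assumes below: "\<And>ws. admissible ws \<Longrightarrow> rate ws < s" and s: "0 < s"
  shows "\<exists>t<s. \<forall>ws. admissible ws \<and> length ws < L \<longrightarrow> rate ws \<le> t"
proof (intro exI conjI allI impI)
  define short where "short = {ws. admissible ws \<and> length ws < L}"
  show "Max (insert 0 (rate ` short)) < s"
    using finite_short_admissible below s unfolding short_def by auto
  show "rate ws \<le> Max (insert 0 (rate ` short))" if "admissible ws \<and> length ws < L" for ws
    using finite_short_admissible that unfolding short_def by auto
qed

text \<open>Long simple cycles are controlled by the gap below the joint spectral radius, short ones
  by the finitely many admissible words they flatten to.\<close>

lemma simple_cycle_weight_le_below:
  assumes below: "\<And>ws. admissible ws \<Longrightarrow> rate ws < s" and r: "0 < r" "r < s"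
    and bounded: "prod_norm1_bounded d high C r" and C: "0 \<le> C"
  obtains t where "r < t" "t < s" "\<And>ps. ps \<noteq> [] \<Longrightarrow> set ps \<subseteq> blocks \<Longrightarrow> distinct (map fst ps) \<Longrightarrow>
    cmod (cycle_weight link ps) \<le> t ^ length (concat_blocks ps)"
proof -
  obtain Q where Q: "\<And>ps. ps \<noteq> [] \<Longrightarrow> set ps \<subseteq> blocks \<Longrightarrow> distinct (map fst ps) \<Longrightarrow>
      cmod (cycle_weight link ps) \<le> Q * r ^ length (concat_blocks ps)"
    using simple_cycle_weight_le[OF bounded C r(1)] by blast
  define t1 where "t1 = (r + s) / 2"
  have t1: "r < t1" "t1 < s" unfolding t1_def using r by auto
  obtain L where L: "\<And>n. L \<le> n \<Longrightarrow> Q * r ^ n \<le> t1 ^ n"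
    using eventually_mult_power_le_power[OF r(1) t1(1)] by (auto simp: eventually_sequentially)
  have "0 < s" using r by linarith
  then obtain t2 where t2: "t2 < s" "\<And>ws. admissible ws \<Longrightarrow> length ws < L \<Longrightarrow> rate ws \<le> t2"
    using short_admissible_rate_le[OF below, of L] by blast
  define t where "t = max t1 t2"
  have "cmod (cycle_weight link ps) \<le> t ^ length (concat_blocks ps)"
    if ps: "ps \<noteq> []" "set ps \<subseteq> blocks" "distinct (map fst ps)" for ps
  proof (cases "L \<le> length (concat_blocks ps)")
    case True
    have "cmod (cycle_weight link ps) \<le> t1 ^ length (concat_blocks ps)" using Q[OF ps] L[OF True] by simp
    also have "\<dots> \<le> t ^ length (concat_blocks ps)" unfolding t_def using t1 r by (intro power_mono) auto
    finally show ?thesis .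
  next
    case False
    let ?w = "concat_blocks ps"
    have w: "admissible ?w" by (rule admissible_concat_blocks[OF ps])
    have "cmod (cycle_weight link ps) \<le> rate ?w ^ length ?w"
      using norm_cycle_weight_le_spectral_radius[OF ps(1,2)] spectral_radius_eq_rate_power[OF w] by simp
    also have "\<dots> \<le> t ^ length ?w"
      using t2(2)[OF w] False unfolding t_def rate_def by (intro power_mono) auto
    finally show ?thesis .
  qed
  then show ?thesis using that[of t] t1 t2 unfolding t_def by auto
qed

lemma norm1_mprod_concat_blocks_le:
  assumes bounded: "prod_norm1_bounded d high C t" and C: "0 \<le> C" and t: "0 < t"
    and path: "cmod (path_weight link ps) * t ^ block_length (last ps) \<le> E * t ^ length (concat_blocks ps)"
    and ps: "ps \<noteq> []" "set ps \<subseteq> blocks"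
  shows "norm1 (mprod (concat_blocks ps)) \<le> (xsum * ysum * C / t) * E * t ^ length (concat_blocks ps)"
proof -
  define w where "w = cmod (path_weight link ps)"
  have last: "last ps \<in> blocks" using ps last_in_set by blast
  have "hd ps \<in> blocks" using ps hd_in_set by blast
  then have hd: "fst (hd ps) \<in> low" by (auto simp: blocks_def)
  have "norm1 (mprod (concat_blocks ps))
        = w * (vnorm1 d (xf (fst (hd ps))) * vnorm1 d (vec_mat d (yf (fst (last ps))) (mprod (snd (last ps)))))"
    unfolding mprod_concat_blocks[OF ps] norm1_smult norm1_outer_mat w_def ..
  also have "\<dots> \<le> w * (xsum * (ysum * (C * t ^ length (snd (last ps)))))"
    using vnorm1_xf_le[OF hd] vnorm1_vec_mat_block_le[OF bounded C last]
    by (intro mult_left_mono mult_mono) (auto simp: w_def vnorm1_nonneg xsum_nonneg)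
  also have "\<dots> = (xsum * ysum * C / t) * (w * t ^ block_length (last ps))"
    using t unfolding block_length_def by (simp add: field_simps)
  also have "\<dots> \<le> (xsum * ysum * C / t) * (E * t ^ length (concat_blocks ps))"
    using path xsum_nonneg ysum_nonneg C t unfolding w_def by (intro mult_left_mono) auto
  finally show ?thesis by (simp add: mult.assoc)
qed

text \<open>A path of blocks is a simple path with cycles cut out of it.\<close>

lemma norm_path_weight_link_le:
  assumes bounded: "prod_norm1_bounded d high C t" and C: "0 \<le> C" and t: "0 < t"
    and simple: "\<And>ps. ps \<noteq> [] \<Longrightarrow> set ps \<subseteq> blocks \<Longrightarrow> distinct (map fst ps) \<Longrightarrow>
      cmod (cycle_weight link ps) \<le> t ^ length (concat_blocks ps)"
  obtains E where "0 \<le> E" "\<And>ps. ps \<noteq> [] \<Longrightarrow> set ps \<subseteq> blocks \<Longrightarrow>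
    cmod (path_weight link ps) * t ^ block_length (last ps) \<le> E * t ^ length (concat_blocks ps)"
proof
  define K where "K = xsum * ysum * C / t"
  show "0 \<le> max 1 K ^ card (fst ` blocks)" by simp
  have fin: "finite (fst ` blocks)"
    using finite_low by (rule finite_subset[rotated]) (auto simp: blocks_def)
  have cycle: "cmod (cycle_weight link ps) \<le> t ^ sum_list (map block_length ps)"
    if "ps \<noteq> []" "set ps \<subseteq> blocks" for ps
    by (rule norm_cycle_weight_le_of_simple[where key = fst and e = link, OF link_cong t _ that])
      (simp_all add: sum_list_block_length simple)
  fix ps assume ps: "ps \<noteq> []" "set ps \<subseteq> blocks"
  have "cmod (path_weight link ps) * t ^ block_length (last ps)
        \<le> max 1 K ^ card (fst ` blocks) * t ^ sum_list (map block_length ps)"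
    unfolding K_def
    by (rule norm_path_weight_le[where key = fst and e = link, OF link_cong t norm_link_le[OF bounded C t] cycle fin ps])
  then show "cmod (path_weight link ps) * t ^ block_length (last ps)
             \<le> max 1 K ^ card (fst ` blocks) * t ^ length (concat_blocks ps)"
    unfolding sum_list_block_length .
qed

lemma prod_norm1_bounded_of_simple_cycles:
  assumes bounded: "prod_norm1_bounded d high C t" and C: "0 \<le> C" and t: "0 < t"
    and simple: "\<And>ps. ps \<noteq> [] \<Longrightarrow> set ps \<subseteq> blocks \<Longrightarrow> distinct (map fst ps) \<Longrightarrow>
      cmod (cycle_weight link ps) \<le> t ^ length (concat_blocks ps)"
  obtains G where "0 < G" "prod_norm1_bounded d A G t"
proof -
  obtain E where E: "0 \<le> E" and path: "\<And>ps. ps \<noteq> [] \<Longrightarrow> set ps \<subseteq> blocks \<Longrightarrow>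
      cmod (path_weight link ps) * t ^ block_length (last ps) \<le> E * t ^ length (concat_blocks ps)"
    using norm_path_weight_link_le[OF bounded C t simple] by blast
  define K where "K = xsum * ysum * C / t"
  have K: "0 \<le> K" unfolding K_def using xsum_nonneg ysum_nonneg C t by auto
  define G where "G = C + C * K * E + 1"
  have G: "0 < G" unfolding G_def using C K E by (simp add: add_nonneg_pos)
  have "norm1 (mprod u) \<le> G * t ^ length u" if u: "set u \<subseteq> A" for u
  proof -
    obtain W ps where split: "u = W @ concat_blocks ps" "set W \<subseteq> high" "set ps \<subseteq> blocks"
      using word_eq_high_concat_blocks[OF u] by blast
    have W: "norm1 (mprod W) \<le> C * t ^ length W" using bounded split(2) by (simp add: prod_norm1_bounded_def)
    show ?thesis
    proof (cases "ps = []")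
      case True
      then have "norm1 (mprod u) \<le> C * t ^ length u" using W split(1) by simp
      also have "\<dots> \<le> G * t ^ length u" unfolding G_def using C K E t by (intro mult_right_mono) auto
      finally show ?thesis .
    next
      case False
      have WA: "set W \<subseteq> A" and cA: "set (concat_blocks ps) \<subseteq> A"
        using split(2,3) A_eq_low_Un_high set_concat_blocks_subset by auto
      have "norm1 (mprod u) \<le> norm1 (mprod W) * norm1 (mprod (concat_blocks ps))"
        unfolding split(1) mat_list_prod_append[OF order.trans[OF WA A_carrier] order.trans[OF cA A_carrier]]
        by (rule norm1_mult_le[OF mprod_carrier[OF WA] mprod_carrier[OF cA]])
      also have "\<dots> \<le> (C * t ^ length W) * (K * E * t ^ length (concat_blocks ps))"
        using W norm1_mprod_concat_blocks_le[OF bounded C t path[OF False split(3)] False split(3)]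
        unfolding K_def using C t by (intro mult_mono) (auto simp: norm1_nonneg)
      also have "\<dots> = C * K * E * t ^ length u" unfolding split(1) by (simp add: power_add ac_simps)
      also have "\<dots> \<le> G * t ^ length u" unfolding G_def using C t by (intro mult_right_mono) auto
      finally show ?thesis .
    qed
  qed
  then show ?thesis using that[OF G] unfolding prod_norm1_bounded_def by blast
qed

lemma jsr_attained:
  assumes gap: "high = {} \<or> jsr d high < jsr d A"
  shows "\<exists>ws. admissible ws \<and> jsr d A = rate ws"
proof (rule ccontr)
  assume none: "\<not> ?thesis"
  define s where "s = jsr_norm1 d A"
  have jsr_eq: "jsr d A = s" unfolding s_def by (rule jsr_eq_jsr_norm1[OF d_pos finite_A A_nonempty A_carrier])
  have below: "rate ws < s" if "admissible ws" for ws
    using spectral_radius_root_le_jsr_norm1[OF d_pos finite_A A_nonempty A_carrier, of ws] that none jsr_eq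
    unfolding admissible_def rate_def s_def by force
  obtain M where M: "M \<in> A" using A_nonempty by auto
  then have "admissible [M]" unfolding admissible_def by auto
  moreover have "0 \<le> rate [M]"
    unfolding rate_def using M by (simp add: spectral_radius_nonneg[OF mprod_carrier d_pos])
  ultimately have "0 < s" using below by fastforce
  then obtain r C where r: "0 < r" "r < s" and C: "0 \<le> C" and bounded_r: "prod_norm1_bounded d high C r"
    using high_prod_norm1_bounded[OF gap] unfolding s_def by blast
  obtain t where t: "r < t" "t < s" and simple: "\<And>ps. ps \<noteq> [] \<Longrightarrow> set ps \<subseteq> blocks \<Longrightarrow>
      distinct (map fst ps) \<Longrightarrow> cmod (cycle_weight link ps) \<le> t ^ length (concat_blocks ps)"
    using simple_cycle_weight_le_below[OF below r bounded_r C] by blast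
  have bounded_t: "prod_norm1_bounded d high C t"
    using prod_norm1_bounded_mono[OF bounded_r C] r t by simp
  obtain G where "0 < G" "prod_norm1_bounded d A G t"
    using prod_norm1_bounded_of_simple_cycles[OF bounded_t C _ simple] r t by auto
  then have "s \<le> t" unfolding s_def using r t
    by (intro jsr_norm1_le_of_prod_norm1_bounded[OF finite_A A_nonempty]) auto
  with t show False by simp
qed

end

lemma exists_rank_le_1_factors:
  assumes "A \<subseteq> carrier_mat d d"
  obtains xf yf where "\<And>M. M \<in> A \<Longrightarrow> mat_rank d M \<le> 1 \<Longrightarrow> M = outer_mat d (xf M) (yf M)"
proof -
  have "\<exists>xy. M \<in> A \<and> mat_rank d M \<le> 1 \<longrightarrow> M = outer_mat d (fst xy) (snd xy)" for M
  proof (cases "M \<in> A \<and> mat_rank d M \<le> 1")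
    case True
    then obtain x y where "M = outer_mat d x y"
      using mat_rank_le_1_imp_outer_mat[of M d] assms by blast
    then show ?thesis by (intro exI[of _ "(x, y)"]) simp
  qed blast
  then obtain f where f: "\<And>M. M \<in> A \<and> mat_rank d M \<le> 1 \<longrightarrow> M = outer_mat d (fst (f M)) (snd (f M))"
    using choice[of "\<lambda>M xy. M \<in> A \<and> mat_rank d M \<le> 1 \<longrightarrow> M = outer_mat d (fst xy) (snd xy)"] by blast
  show ?thesis by (rule that[of "\<lambda>M. fst (f M)" "\<lambda>M. snd (f M)"]) (use f in blast)
qed

theorem theorem1:
  fixes d :: nat and A :: "complex mat set"
  assumes "0 < d"
    and "finite A" and "A \<noteq> {}"
    and "A \<subseteq> carrier_mat d d"
    and "{M \<in> A. 2 \<le> mat_rank d M} = {} \<or>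
         jsr d {M \<in> A. 2 \<le> mat_rank d M} < jsr d A"
  shows "\<exists>ws. length ws \<ge> 1 \<and> set ws \<subseteq> A \<and>
           (\<forall>M \<in> A. mat_rank d M = 1 \<longrightarrow> count_list ws M \<le> 1) \<and>
           jsr d A = spectral_radius (mat_list_prod d ws) powr (1 / real (length ws))"
proof -
  obtain xf yf where "\<And>M. M \<in> A \<Longrightarrow> mat_rank d M \<le> 1 \<Longrightarrow> M = outer_mat d (xf M) (yf M)"
    using exists_rank_le_1_factors[OF assms(4)] by blast
  then interpret rank_one_factorization d A xf yf
    using assms(1-4) by unfold_locales
  show ?thesis
    using jsr_attained assms(5) unfolding high_def admissible_def rate_def by blast
qed

end
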